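(* Let $V$ be a toroidal vertex algebra, let $I$ be an ideal of $V$, let $L=V/I$ be the quotient toroidal vertex algebra with quotient map $p:V\to L$ (so that $p(V^0)=L^0$). Let $(W,Y_W)$ be a $V$-module. Then $W$ is naturally an $L$-module (i.e. there is an $L$-module structure $Y'_W$ on $W$ with $Y'_W(p(v);x_0,\mathbf{x})=Y_W(v;x_0,\mathbf{x})$ for all $v\in V$) if and only if $W$ is naturally an $L^0$-module (i.e. there is an $L^0$-module structure $Y''_W$ on $W$ with $Y''_W(p(u);x_0,\mathbf{x})=Y_W(u;x_0,\mathbf{x})$ for all $u\in V^0$). Furthermore, the category of $L$-modules is the intersection of the category of $V$-modules and the category of $L^0$-modules, all regarded (via restriction along $V^0\hookrightarrow V$, $V^0\to L^0\hookrightarrow L$) as strictly full subcategories of the category of $V^0$-modules.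
   Context: Fix a positive integer $r$. Write $\mathbf{x}=(x_1,\dots,x_r)$, $\mathbf{x}^{\mathbf{m}}=x_1^{m_1}\cdots x_r^{m_r}$ (similarly for other variables), $\mathbf{z}\mathbf{y}=(z_1y_1,\dots,z_ry_r)$. For a vector space $W$ put $\mathcal{E}(W,r)=\mathrm{Hom}(W,W[[x_1^{\pm1},\dots,x_r^{\pm1}]]((x_0)))$. A toroidal vertex algebra is a vector space $V$ with a linear map $Y(\cdot;x_0,\mathbf{x}):V\to\mathcal{E}(V,r)$, $v\mapsto\sum_{(m_0,\mathbf{m})\in\mathbb{Z}\times\mathbb{Z}^r}v_{m_0,\mathbf{m}}x_0^{-m_0-1}\mathbf{x}^{-\mathbf{m}}$, and a vector $\mathbf{1}$ with $Y(\mathbf{1};x_0,\mathbf{x})v=v$, $Y(v;x_0,\mathbf{x})\mathbf{1}\in V[[x_0,x_1^{\pm1},\dots,x_r^{\pm1}]]$, and the Jacobi identity $$z_0^{-1}\delta\!\left(\tfrac{x_0-y_0}{z_0}\right)Y(u;x_0,\mathbf{z}\mathbf{y})Y(v;y_0,\mathbf{y})-z_0^{-1}\delta\!\left(\tfrac{y_0-x_0}{-z_0}\right)Y(v;y_0,\mathbf{y})Y(u;x_0,\mathbf{z}\mathbf{y})=y_0^{-1}\delta\!\left(\tfrac{x_0-z_0}{y_0}\right)Y(Y(u;z_0,\mathbf{z})v;y_0,\mathbf{y})$$ for all $u,v$, where $Y(u;x_0,\mathbf{z}\mathbf{y})=\sum u_{m_0,\mathbf{m}}x_0^{-m_0-1}\mathbf{z}^{-\mathbf{m}}\mathbf{y}^{-\mathbf{m}}$.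 A module is a vector space $W$ with linear $Y_W:V\to\mathcal{E}(W,r)$, $Y_W(\mathbf{1};x_0,\mathbf{x})=1_W$, satisfying the Jacobi identity with $Y_W$ in the three outer operator places. Ideals: subspaces $I$ with $u_{m_0,\mathbf{m}}v\in I$ whenever $u\in I$ or $v\in I$. For any toroidal vertex algebra $U$, $U^0=\mathrm{span}\{u_{m_0,\mathbf{m}}\mathbf{1}\}$ is a toroidal vertex subalgebra. A subcategory $\mathcal{C}_1\subset\mathcal{C}$ is strictly full if it is full and every object of $\mathcal{C}$ isomorphic to an object of $\mathcal{C}_1$ lies in $\mathcal{C}_1$. *)

theory Defs
  imports Complex_Main
begin

text \<open>
A vector space is a type with an abelian group
   structure and a scalar multiplication s :: complex => 'a => 'a with vector_space s.
 * Multi-indices in Z^r are functions 'r => int for a finite index type 'r with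
   CARD('r) = r (r >= 1 is automatic).
 * A map Y : A -> E(W,r) is given by its modes:  Y u m0 m w = u_{m0,m} w, i.e.
   Y(u;x0,x) = sum u_{m0,m} x0^(-m0-1) x^(-m).
 * Algebras may live on a subspace S of an ambient type (needed for V^0, L^0),
   modules live on a subspace W of an ambient type.
\<close>

definition is_subspace :: "(complex \<Rightarrow> 'a::ab_group_add \<Rightarrow> 'a) \<Rightarrow> 'a set \<Rightarrow> bool" where
  "is_subspace s S \<longleftrightarrow> 0 \<in> S \<and> (\<forall>x\<in>S. \<forall>y\<in>S. x + y \<in> S) \<and> (\<forall>c. \<forall>x\<in>S. s c x \<in> S)"

text \<open>Sum of a finitely supported family (all sums below have finite support by truncation).\<close>
definition fsum :: "(nat \<Rightarrow> 'a::comm_monoid_add) \<Rightarrow> 'a" where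
  "fsum f = sum f {j. f j \<noteq> 0}"

definition cbinom :: "int \<Rightarrow> nat \<Rightarrow> complex" where
  "cbinom n j = (of_int n :: complex) gchoose j"

text \<open>
Coefficient of  z0^(-l-1) x0^(-M-1) y0^(-N-1) z^(-a) y^(-b)  of the Jacobi identity
applied to w, with the delta functions expanded as usual:
  z0^-1 delta((x0-y0)/z0)   = sum_n z0^(-n-1) sum_j binom(n,j) (-1)^j x0^(n-j) y0^j,
  z0^-1 delta((y0-x0)/(-z0)) = sum_n z0^(-n-1) (-1)^n sum_j binom(n,j) (-1)^j y0^(n-j) x0^j,
  y0^-1 delta((x0-z0)/y0)   = sum_n y0^(-n-1) sum_j binom(n,j) (-1)^j x0^(n-j) z0^j.
\<close>
definition jacobi_coeff ::
  "('v \<Rightarrow> int \<Rightarrow> ('r \<Rightarrow> int) \<Rightarrow> 'v \<Rightarrow> 'v)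
   \<Rightarrow> (complex \<Rightarrow> 'w::ab_group_add \<Rightarrow> 'w)
   \<Rightarrow> ('v \<Rightarrow> int \<Rightarrow> ('r \<Rightarrow> int) \<Rightarrow> 'w \<Rightarrow> 'w)
   \<Rightarrow> 'v \<Rightarrow> 'v \<Rightarrow> 'w \<Rightarrow> int \<Rightarrow> int \<Rightarrow> int \<Rightarrow> ('r \<Rightarrow> int) \<Rightarrow> ('r \<Rightarrow> int) \<Rightarrow> bool" where
  "jacobi_coeff YA sW YW u v w l M N a b \<longleftrightarrow>
     fsum (\<lambda>j. sW ((-1) ^ j * cbinom l j)
                  (YW u (M + l - int j) a (YW v (N + int j) (\<lambda>i. b i - a i) w)))
   - fsum (\<lambda>j. sW ((-1) powi l * (-1) ^ j * cbinom l j)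
                  (YW v (N + l - int j) (\<lambda>i. b i - a i) (YW u (M + int j) a w)))
   = fsum (\<lambda>j. sW ((-1) ^ j * cbinom (- M - 1 + int j) j)
                  (YW (YA u (l + int j) a v) (M + N - int j) b w))"

definition tmod ::
  "('v \<Rightarrow> int \<Rightarrow> ('r \<Rightarrow> int) \<Rightarrow> 'v \<Rightarrow> 'v) \<Rightarrow> (complex \<Rightarrow> 'v::ab_group_add \<Rightarrow> 'v) \<Rightarrow> 'v set \<Rightarrow> 'v
   \<Rightarrow> (complex \<Rightarrow> 'w::ab_group_add \<Rightarrow> 'w) \<Rightarrow> 'w set
   \<Rightarrow> ('v \<Rightarrow> int \<Rightarrow> ('r::finite \<Rightarrow> int) \<Rightarrow> 'w \<Rightarrow> 'w) \<Rightarrow> bool" where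
  "tmod YA sA S oneA sW W YW \<longleftrightarrow>
     vector_space sW \<and> is_subspace sW W \<and>
     \<comment> \<open>Y_W maps S into Hom(W, W[[x^{\<plusminus>1}]]((x0))): each mode is a linear map W -> W\<close>
     (\<forall>u\<in>S. \<forall>m0 m. \<forall>w\<in>W. YW u m0 m w \<in> W) \<and>
     (\<forall>u\<in>S. \<forall>m0 m. \<forall>c. \<forall>w1\<in>W. \<forall>w2\<in>W.
         YW u m0 m (sW c w1 + w2) = sW c (YW u m0 m w1) + YW u m0 m w2) \<and>
     \<comment> \<open>lower truncation in x0, uniformly in the toroidal index\<close>
     (\<forall>u\<in>S. \<forall>w\<in>W. \<exists>K. \<forall>m0\<ge>K. \<forall>m. YW u m0 m w = 0) \<and>
     \<comment> \<open>Y_W is linear on S\<close>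
     (\<forall>u1\<in>S. \<forall>u2\<in>S. \<forall>c m0 m. \<forall>w\<in>W.
         YW (sA c u1 + u2) m0 m w = sW c (YW u1 m0 m w) + YW u2 m0 m w) \<and>
     \<comment> \<open>Y_W(1;x0,x) = 1_W\<close>
     (\<forall>m0 m. \<forall>w\<in>W. YW oneA m0 m w = (if m0 = -1 \<and> m = (\<lambda>_. 0) then w else 0)) \<and>
     \<comment> \<open>Jacobi identity, coefficientwise\<close>
     (\<forall>u\<in>S. \<forall>v\<in>S. \<forall>w\<in>W. \<forall>l M N a b. jacobi_coeff YA sW YW u v w l M N a b)"

definition tva ::
  "('v \<Rightarrow> int \<Rightarrow> ('r::finite \<Rightarrow> int) \<Rightarrow> 'v \<Rightarrow> 'v) \<Rightarrow> (complex \<Rightarrow> 'v::ab_group_add \<Rightarrow> 'v) \<Rightarrow> 'v set \<Rightarrow> 'v \<Rightarrow> bool" where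
  "tva Y s S one \<longleftrightarrow>
     one \<in> S \<and> tmod Y s S one s S Y \<and>
     \<comment> \<open>creation property: Y(v;x0,x)1 \<in> V[[x0,x^{\<plusminus>1}]]\<close>
     (\<forall>v\<in>S. \<forall>m0\<ge>0. \<forall>m. Y v m0 m one = 0)"

definition tideal ::
  "('v \<Rightarrow> int \<Rightarrow> ('r::finite \<Rightarrow> int) \<Rightarrow> 'v \<Rightarrow> 'v) \<Rightarrow> (complex \<Rightarrow> 'v::ab_group_add \<Rightarrow> 'v) \<Rightarrow> 'v set \<Rightarrow> bool" where
  "tideal Y s I \<longleftrightarrow> is_subspace s I \<and>
     (\<forall>u v m0 m. (u \<in> I \<or> v \<in> I) \<longrightarrow> Y u m0 m v \<in> I)"

definition tva_zero ::
  "('v \<Rightarrow> int \<Rightarrow> ('r \<Rightarrow> int) \<Rightarrow> 'v \<Rightarrow> 'v) \<Rightarrow> (complex \<Rightarrow> 'v::ab_group_add \<Rightarrow> 'v) \<Rightarrow> 'v set \<Rightarrow> 'v \<Rightarrow> 'v set" where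
  "tva_zero Y s S one = module.span s {Y u m0 m one | u m0 m. u \<in> S}"

definition is_linear :: "(complex \<Rightarrow> 'a::ab_group_add \<Rightarrow> 'a) \<Rightarrow> (complex \<Rightarrow> 'b::ab_group_add \<Rightarrow> 'b) \<Rightarrow> ('a \<Rightarrow> 'b) \<Rightarrow> bool" where
  "is_linear s1 s2 f \<longleftrightarrow> (\<forall>c x y. f (s1 c x + y) = s2 c (f x) + f y)"

definition tmod_hom ::
  "'v set \<Rightarrow> (complex \<Rightarrow> 'w1::ab_group_add \<Rightarrow> 'w1) \<Rightarrow> ('v \<Rightarrow> int \<Rightarrow> ('r \<Rightarrow> int) \<Rightarrow> 'w1 \<Rightarrow> 'w1)
   \<Rightarrow> (complex \<Rightarrow> 'w2::ab_group_add \<Rightarrow> 'w2) \<Rightarrow> ('v \<Rightarrow> int \<Rightarrow> ('r \<Rightarrow> int) \<Rightarrow> 'w2 \<Rightarrow> 'w2)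
   \<Rightarrow> ('w1 \<Rightarrow> 'w2) \<Rightarrow> bool" where
  "tmod_hom S s1 Y1 s2 Y2 f \<longleftrightarrow> is_linear s1 s2 f \<and> (\<forall>u\<in>S. \<forall>m0 m w. f (Y1 u m0 m w) = Y2 u m0 m (f w))"

text \<open>The V^0-module (W,Y0) (W the whole ambient type) is the restriction, along
  q : S0 -> SB, of a module structure on W for the algebra (SB, YB, oneB).\<close>
definition in_image ::
  "('b \<Rightarrow> int \<Rightarrow> ('r::finite \<Rightarrow> int) \<Rightarrow> 'b \<Rightarrow> 'b) \<Rightarrow> (complex \<Rightarrow> 'b::ab_group_add \<Rightarrow> 'b) \<Rightarrow> 'b set \<Rightarrow> 'b
   \<Rightarrow> ('v \<Rightarrow> 'b) \<Rightarrow> 'v set \<Rightarrow> (complex \<Rightarrow> 'w::ab_group_add \<Rightarrow> 'w)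
   \<Rightarrow> ('v \<Rightarrow> int \<Rightarrow> ('r \<Rightarrow> int) \<Rightarrow> 'w \<Rightarrow> 'w) \<Rightarrow> bool" where
  "in_image YB sB SB oneB q S0 sW Y0 \<longleftrightarrow>
     (\<exists>Y'. tmod YB sB SB oneB sW UNIV Y' \<and>
        (\<forall>u\<in>S0. \<forall>m0 m w. Y' (q u) m0 m w = Y0 u m0 m w))"

end

theory Submission imports Defs begin

text \<open>
The coefficient of the Jacobi identity for the pair (u, 1) with l = -1, together with the
creation property, shows that in every module the mode u_{k,m} acts as (u_{-1,m} 1)_{k,m}.
Since u_{-1,m} 1 lies in V^0, a module structure is determined by its restriction to V^0,
and maps of V^0-modules between V-modules are V-module maps. Conversely, an L^0-structure
Y'' compatible with a V-module W extends to L by a \<mapsto> (Y''(a_{-1,m} 1))_{k,m}: this is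
compatible with p on all of V, so the module axioms descend from V to L along the surjection p.
\<close>

lemma fsum_eq_single: "(\<And>j. j \<noteq> 0 \<Longrightarrow> f j = 0) \<Longrightarrow> fsum f = f 0"
proof -
  assume h: "\<And>j. j \<noteq> 0 \<Longrightarrow> f j = 0"
  then have "{j. f j \<noteq> 0} \<subseteq> {0}" by auto
  then consider "{j. f j \<noteq> 0} = {}" | "{j. f j \<noteq> 0} = {0}" by blast
  then show ?thesis by cases (auto simp: fsum_def)
qed

lemma fsum_eq_zero: "(\<And>j. f j = 0) \<Longrightarrow> fsum f = 0"
  by (simp add: fsum_def)

lemma vector_space_scale_one: "vector_space s \<Longrightarrow> s 1 x = x"
  by (simp add: module.scale_one module_iff_vector_space[symmetric])

lemma vector_space_scale_zero: "vector_space s \<Longrightarrow> s c 0 = 0"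
  by (simp add: module.scale_zero_right module_iff_vector_space[symmetric])

lemma is_linear_facts:
  assumes "is_linear s1 s2 f" "vector_space s1" "vector_space s2"
  shows "additive f" "f 0 = 0" "\<And>c x. f (s1 c x) = s2 c (f x)"
proof -
  have "f (x + y) = f x + f y" for x y
    using assms(1)[unfolded is_linear_def, rule_format, of 1 x y]
    by (simp add: vector_space_scale_one assms(2,3))
  then show add: "additive f" by (rule additive.intro)
  then show zero: "f 0 = 0" by (rule additive.zero)
  show "f (s1 c x) = s2 c (f x)" for c x
    using assms(1)[unfolded is_linear_def, rule_format, of c x 0] zero by simp
qed

lemma tmod_UNIV:
  "tmod YA sA S oneA sW UNIV YW \<longleftrightarrow>
     vector_space sW \<and>
     (\<forall>u\<in>S. \<forall>m0 m c w1 w2.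
         YW u m0 m (sW c w1 + w2) = sW c (YW u m0 m w1) + YW u m0 m w2) \<and>
     (\<forall>u\<in>S. \<forall>w. \<exists>K. \<forall>m0\<ge>K. \<forall>m. YW u m0 m w = 0) \<and>
     (\<forall>u1\<in>S. \<forall>u2\<in>S. \<forall>c m0 m w.
         YW (sA c u1 + u2) m0 m w = sW c (YW u1 m0 m w) + YW u2 m0 m w) \<and>
     (\<forall>m0 m w. YW oneA m0 m w = (if m0 = -1 \<and> m = (\<lambda>_. 0) then w else 0)) \<and>
     (\<forall>u\<in>S. \<forall>v\<in>S. \<forall>w l M N a b. jacobi_coeff YA sW YW u v w l M N a b)"
  unfolding tmod_def is_subspace_def by auto

lemma tmod_mono:
  assumes "tmod YA sA S oneA sW W YW" "S' \<subseteq> S"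
  shows "tmod YA sA S' oneA sW W YW"
  using assms unfolding tmod_def
  by (elim conjE) (intro conjI; (assumption | metis subsetD))

lemma tmod_mode_apply_zero:
  assumes "tmod YA sA S oneA sW UNIV YW" "u \<in> S"
  shows "YW u k m 0 = 0"
proof -
  have "vector_space sW" using assms(1) unfolding tmod_UNIV by blast
  moreover have "YW u k m (sW 1 0 + 0) = sW 1 (YW u k m 0) + YW u k m 0"
    using assms unfolding tmod_UNIV by (meson add.right_neutral)
  ultimately show ?thesis by (simp add: vector_space_scale_one)
qed

lemma tmod_mode_of_zero:
  assumes "tmod YA sA S oneA sW UNIV YW" "0 \<in> S" "vector_space sA"
  shows "YW 0 k m w = 0"
proof -
  have "vector_space sW" using assms(1) unfolding tmod_UNIV by blast
  moreover have "YW (sA 1 0 + 0) k m w = sW 1 (YW 0 k m w) + YW 0 k m w"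
    using assms(1,2) unfolding tmod_UNIV by (meson add.right_neutral)
  ultimately show ?thesis by (simp add: vector_space_scale_one assms(3))
qed

lemma tva_vector_space: "tva YA sA S oneA \<Longrightarrow> vector_space sA"
  unfolding tva_def tmod_def by blast

lemma tva_creation: "tva YA sA UNIV oneA \<Longrightarrow> m0 \<ge> 0 \<Longrightarrow> YA v m0 m oneA = 0"
  unfolding tva_def by blast

lemma tmod_mode_via_vacuum:
  assumes A: "tva YA sA UNIV oneA" and M: "tmod YA sA UNIV oneA sW UNIV YW"
  shows "YW u k m w = YW (YA u (-1) m oneA) k m w"
proof -
  have vs: "vector_space sW" using M unfolding tmod_UNIV by blast
  have one: "YW oneA m0 m' w' = (if m0 = -1 \<and> m' = (\<lambda>_. 0) then w' else 0)" for m0 m' w'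
    using M unfolding tmod_UNIV by blast
  have jac: "jacobi_coeff YA sW YW u oneA w (-1) (k+1) (-1) m m"
    using M unfolding tmod_UNIV by blast
  have w0: "YW u' k' m' 0 = 0" for u' k' m' using M by (rule tmod_mode_apply_zero) simp
  have u0: "YW 0 k' m' w' = 0" for k' m' w'
    using M by (rule tmod_mode_of_zero) (simp_all add: tva_vector_space[OF A])
  have diag: "(\<lambda>i. m i - m i) = (\<lambda>_. 0::int)" by auto
  have lhs1: "fsum (\<lambda>j. sW ((-1) ^ j * cbinom (-1) j)
                  (YW u ((k+1) + (-1) - int j) m (YW oneA ((-1) + int j) (\<lambda>i. m i - m i) w)))
        = YW u k m w"
    by (subst fsum_eq_single)
      (auto simp: diag one w0 vs vector_space_scale_zero vector_space_scale_one cbinom_def)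
  have lhs2: "fsum (\<lambda>j. sW ((-1) powi (-1) * (-1) ^ j * cbinom (-1) j)
                  (YW oneA ((-1) + (-1) - int j) (\<lambda>i. m i - m i) (YW u ((k+1) + int j) m w))) = 0"
    by (rule fsum_eq_zero) (auto simp: diag one vs vector_space_scale_zero)
  have rhs: "fsum (\<lambda>j. sW ((-1) ^ j * cbinom (- (k+1) - 1 + int j) j)
                  (YW (YA u ((-1) + int j) m oneA) ((k+1) + (-1) - int j) m w))
       = YW (YA u (-1) m oneA) k m w"
    \<comment> \<open>by creation, only the term j = 0 survives\<close>
    by (subst fsum_eq_single)
      (auto simp: tva_creation[OF A] u0 vs vector_space_scale_zero vector_space_scale_one cbinom_def)
  show ?thesis using jac unfolding jacobi_coeff_def lhs1 lhs2 rhs by simp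
qed

lemma tmod_pullback:
  assumes M: "tmod YL sL UNIV oneL sW UNIV Y'" and lin: "is_linear sV sL p"
    and hom: "\<And>u v m0 m. p (Y u m0 m v) = YL (p u) m0 m (p v)" and unit: "p one = oneL"
  shows "tmod Y sV UNIV one sW UNIV (\<lambda>v. Y' (p v))"
proof -
  have jac: "jacobi_coeff Y sW (\<lambda>v. Y' (p v)) u v w l M N a b
      \<longleftrightarrow> jacobi_coeff YL sW Y' (p u) (p v) w l M N a b" for u v w l M N a b
    unfolding jacobi_coeff_def by (simp add: hom)
  have lin': "p (sV c u1 + u2) = sL c (p u1) + p u2" for c u1 u2
    using lin unfolding is_linear_def by blast
  show ?thesis using M unfolding tmod_UNIV jac lin' unit by (simp; blast)
qed

lemma tmod_pushforward:
  assumes M: "tmod Y sV UNIV one sW UNIV YW" and lin: "is_linear sV sL p" and surj: "surj p"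
    and hom: "\<And>u v m0 m. p (Y u m0 m v) = YL (p u) m0 m (p v)" and unit: "p one = oneL"
    and compat: "\<And>v. Y' (p v) = YW v"
  shows "tmod YL sL UNIV oneL sW UNIV Y'"
proof -
  have jac: "jacobi_coeff YL sW Y' (p u) (p v) w l M N a b
      \<longleftrightarrow> jacobi_coeff Y sW YW u v w l M N a b" for u v w l M N a b
    unfolding jacobi_coeff_def by (simp add: hom[symmetric] compat)
  have lin': "sL c (p u1) + p u2 = p (sV c u1 + u2)" for c u1 u2
    using lin unfolding is_linear_def by simp
  have all: "(\<forall>a. P a) \<longleftrightarrow> (\<forall>v. P (p v))" for P using surj by (metis surj_def)
  from M show ?thesis unfolding tmod_UNIV ball_UNIV all jac lin' compat unit[symmetric] by simp
qed

lemma tmod_transport_bij: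
  assumes M: "tmod YA sA S oneA s1 UNIV Y1" and vs2: "vector_space s2"
    and lin: "is_linear s1 s2 f" and bij: "bij f"
  shows "tmod YA sA S oneA s2 UNIV (\<lambda>a m0 m w. f (Y1 a m0 m (inv f w)))"
proof -
  let ?Y2 = "\<lambda>a m0 m w. f (Y1 a m0 m (inv f w))"
  have vs1: "vector_space s1" using M unfolding tmod_UNIV by blast
  note f_lin = is_linear_facts[OF lin vs1 vs2]
  have f_inv: "f (inv f w) = w" for w using bij by (simp add: bij_is_surj surj_f_inv_f)
  have inv_f: "inv f (f x) = x" for x using bij by (simp add: bij_is_inj)
  have f_eq: "f x = f y \<longleftrightarrow> x = y" for x y by (metis inv_f)
  have f_zero: "f x = 0 \<longleftrightarrow> x = 0" for x using f_eq[of x 0] f_lin(2) by simp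
  have f_scale: "s2 c (f x) = f (s1 c x)" for c x using f_lin(3) by simp
  have f_add: "f x + f y = f (x + y)" for x y using additive.add[OF f_lin(1)] by simp
  have f_diff: "f x - f y = f (x - y)" for x y using additive.diff[OF f_lin(1)] by simp
  have f_fsum: "fsum (\<lambda>j. f (h j)) = f (fsum h)" for h :: "nat \<Rightarrow> _"
    unfolding fsum_def f_zero by (simp add: additive.sum[OF f_lin(1)])
  have inv_lin: "inv f (s2 c w1 + w2) = s1 c (inv f w1) + inv f w2" for c w1 w2
    by (metis f_inv inv_f f_scale f_add)
  have jac: "jacobi_coeff YA s2 ?Y2 u v w l M N a b
      \<longleftrightarrow> jacobi_coeff YA s1 Y1 u v (inv f w) l M N a b" for u v w l M N a b
    unfolding jacobi_coeff_def by (simp add: inv_f f_scale f_fsum f_diff f_eq)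
  have all: "(\<forall>w. P w) \<longleftrightarrow> (\<forall>w. P (f w))" for P by (metis f_inv)
  have trunc: "\<forall>u\<in>S. \<forall>w. \<exists>K. \<forall>m0\<ge>K. \<forall>m. ?Y2 u m0 m w = 0"
    using M unfolding tmod_UNIV f_zero by (metis all inv_f)
  have lin_w: "\<forall>u\<in>S. \<forall>m0 m c w1 w2.
      ?Y2 u m0 m (s2 c w1 + w2) = s2 c (?Y2 u m0 m w1) + ?Y2 u m0 m w2"
    using M unfolding tmod_UNIV by (simp add: inv_lin f_scale f_add)
  have lin_u: "\<forall>u1\<in>S. \<forall>u2\<in>S. \<forall>c m0 m w.
      ?Y2 (sA c u1 + u2) m0 m w = s2 c (?Y2 u1 m0 m w) + ?Y2 u2 m0 m w"
    using M unfolding tmod_UNIV by (simp add: f_scale f_add)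
  have vacuum: "\<forall>m0 m w. ?Y2 oneA m0 m w = (if m0 = -1 \<and> m = (\<lambda>_. 0) then w else 0)"
    using M unfolding tmod_UNIV by (simp add: f_inv f_lin(2))
  have jacobi: "\<forall>u\<in>S. \<forall>v\<in>S. \<forall>w l M N a b. jacobi_coeff YA s2 ?Y2 u v w l M N a b"
    using M unfolding tmod_UNIV jac by blast
  show ?thesis unfolding tmod_UNIV using vs2 trunc lin_w lin_u vacuum jacobi by blast
qed

lemma in_image_transport_bij:
  assumes img: "in_image YB sB SB oneB q S0 s1 Y1" and M2: "tmod YA sA S0 oneA s2 UNIV Y2"
    and f: "tmod_hom S0 s1 Y1 s2 Y2 f" "bij f"
  shows "in_image YB sB SB oneB q S0 s2 Y2"
proof -
  obtain Y' where Y': "tmod YB sB SB oneB s1 UNIV Y'"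
    and compat: "\<forall>u\<in>S0. \<forall>m0 m w. Y' (q u) m0 m w = Y1 u m0 m w"
    using img unfolding in_image_def by blast
  have vs2: "vector_space s2" using M2 unfolding tmod_UNIV by blast
  have lin: "is_linear s1 s2 f" and intertw: "\<forall>u\<in>S0. \<forall>m0 m w. f (Y1 u m0 m w) = Y2 u m0 m (f w)"
    using f(1) unfolding tmod_hom_def by blast+
  have f_inv: "f (inv f w) = w" for w using f(2) by (simp add: bij_is_surj surj_f_inv_f)
  show ?thesis unfolding in_image_def
    using tmod_transport_bij[OF Y' vs2 lin f(2)] compat intertw f_inv by fastforce
qed

lemma tmod_hom_image:
  assumes "tmod_hom S s1 (\<lambda>u. Y1 (q u)) s2 (\<lambda>u. Y2 (q u)) f" "T \<subseteq> q ` S"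
  shows "tmod_hom T s1 Y1 s2 Y2 f"
  using assms unfolding tmod_hom_def by blast

locale tva_surj_hom =
  fixes Y :: "'v::ab_group_add \<Rightarrow> int \<Rightarrow> ('r::finite \<Rightarrow> int) \<Rightarrow> 'v \<Rightarrow> 'v"
    and sV :: "complex \<Rightarrow> 'v \<Rightarrow> 'v" and one :: 'v
    and YL :: "'l::ab_group_add \<Rightarrow> int \<Rightarrow> ('r \<Rightarrow> int) \<Rightarrow> 'l \<Rightarrow> 'l"
    and sL :: "complex \<Rightarrow> 'l \<Rightarrow> 'l" and oneL :: 'l and p :: "'v \<Rightarrow> 'l"
  assumes V: "tva Y sV UNIV one" and L: "tva YL sL UNIV oneL"
    and lin: "is_linear sV sL p" and surj: "surj p"
    and hom: "\<And>u v m0 m. p (Y u m0 m v) = YL (p u) m0 m (p v)" and unit: "p one = oneL"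
begin

abbreviation "V0 \<equiv> tva_zero Y sV UNIV one"
abbreviation "L0 \<equiv> tva_zero YL sL UNIV oneL"

lemma vacuum_mode_in_V0: "Y u m0 m one \<in> V0"
  unfolding tva_zero_def
  by (rule module.span_base) (auto simp: tva_vector_space[OF V] module_iff_vector_space)

lemma L0_subset_image_V0: "L0 \<subseteq> p ` V0"
proof
  have mV: "module sV" and mL: "module sL"
    using tva_vector_space[OF V] tva_vector_space[OF L] by (simp_all add: module_iff_vector_space)
  note p_lin = is_linear_facts[OF lin tva_vector_space[OF V] tva_vector_space[OF L]]
  fix a assume a: "a \<in> L0"
  show "a \<in> p ` V0"
  proof (rule module.span_induct_alt[OF mL, where h = "\<lambda>a. a \<in> p ` V0"])
    show "a \<in> module.span sL {YL u m0 m oneL |u m0 m. u \<in> UNIV}"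
      using a unfolding tva_zero_def .
    have "0 \<in> V0" unfolding tva_zero_def by (rule module.span_zero[OF mV])
    then show "0 \<in> p ` V0" using p_lin(2) by (metis image_eqI)
  next
    fix c x y
    assume x: "x \<in> {YL u m0 m oneL |u m0 m. u \<in> UNIV}" and y: "y \<in> p ` V0"
    obtain a m0 m where "x = YL a m0 m oneL" using x by blast
    moreover obtain u where "a = p u" using surj by (metis surjD)
    ultimately have x: "x = YL (p u) m0 m oneL" by simp
    obtain v where v: "v \<in> V0" "y = p v" using y by blast
    have "sL c x + y = p (sV c (Y u m0 m one) + v)"
      using lin[unfolded is_linear_def, rule_format, of c "Y u m0 m one" v]
      by (simp add: x v(2) hom unit)
    moreover have "sV c (Y u m0 m one) + v \<in> V0"
      using v(1) vacuum_mode_in_V0 unfolding tva_zero_def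
      by (intro module.span_add[OF mV] module.span_scale[OF mV])
    ultimately show "sL c x + y \<in> p ` V0" by blast
  qed
qed

lemma L_module_mode_via_V0:
  assumes "tmod YL sL UNIV oneL sW UNIV Y'"
  shows "Y' (p v) k m w = Y' (p (Y v (-1) m one)) k m w"
  using tmod_mode_via_vacuum[OF L assms] by (simp add: hom unit)

lemma V_module_extends_to_L:
  assumes M: "tmod Y sV UNIV one sW UNIV YW"
    and compat: "\<forall>u\<in>V0. \<forall>m0 m w. Y'' (p u) m0 m w = YW u m0 m w"
  shows "in_image YL sL UNIV oneL p UNIV sW YW"
proof -
  let ?Y = "\<lambda>a m0 m w. Y'' (YL a (-1) m oneL) m0 m w"
  have eq: "?Y (p v) m0 m w = YW v m0 m w" for v m0 m w
    using compat vacuum_mode_in_V0 tmod_mode_via_vacuum[OF V M, of v m0 m w]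
    by (simp add: hom[symmetric] unit[symmetric])
  have "tmod YL sL UNIV oneL sW UNIV ?Y"
    by (rule tmod_pushforward[OF M lin surj hom unit]) (intro ext eq)
  then show ?thesis unfolding in_image_def using eq by blast
qed

lemma V_module_in_image_L_iff_L0:
  assumes M: "tmod Y sV UNIV one sW UNIV YW"
  shows "in_image YL sL UNIV oneL p UNIV sW YW \<longleftrightarrow> in_image YL sL L0 oneL p V0 sW YW"
proof
  assume "in_image YL sL UNIV oneL p UNIV sW YW"
  then show "in_image YL sL L0 oneL p V0 sW YW"
    unfolding in_image_def using tmod_mono[of YL sL UNIV oneL sW UNIV _ L0] by blast
next
  assume "in_image YL sL L0 oneL p V0 sW YW"
  then obtain Y'' where "\<forall>u\<in>V0. \<forall>m0 m w. Y'' (p u) m0 m w = YW u m0 m w"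
    unfolding in_image_def by blast
  then show "in_image YL sL UNIV oneL p UNIV sW YW" by (rule V_module_extends_to_L[OF M])
qed

lemma in_image_L_iff_V_and_L0:
  "in_image YL sL UNIV oneL p V0 sW Y0 \<longleftrightarrow>
     in_image Y sV UNIV one id V0 sW Y0 \<and> in_image YL sL L0 oneL p V0 sW Y0"
proof
  assume "in_image YL sL UNIV oneL p V0 sW Y0"
  then obtain Y' where Y': "tmod YL sL UNIV oneL sW UNIV Y'"
    and compat: "\<forall>u\<in>V0. \<forall>m0 m w. Y' (p u) m0 m w = Y0 u m0 m w"
    unfolding in_image_def by blast
  have "in_image Y sV UNIV one id V0 sW Y0"
    unfolding in_image_def using tmod_pullback[OF Y' lin hom unit] compat by fastforce
  moreover have "in_image YL sL L0 oneL p V0 sW Y0"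
    unfolding in_image_def using tmod_mono[OF Y', of L0] compat by blast
  ultimately show "in_image Y sV UNIV one id V0 sW Y0 \<and> in_image YL sL L0 oneL p V0 sW Y0" ..
next
  assume "in_image Y sV UNIV one id V0 sW Y0 \<and> in_image YL sL L0 oneL p V0 sW Y0"
  then obtain YW Y'' where M: "tmod Y sV UNIV one sW UNIV YW"
    and compat: "\<forall>u\<in>V0. \<forall>m0 m w. YW u m0 m w = Y0 u m0 m w"
    and compat'': "\<forall>u\<in>V0. \<forall>m0 m w. Y'' (p u) m0 m w = Y0 u m0 m w"
    unfolding in_image_def by auto
  have "in_image YL sL UNIV oneL p UNIV sW YW"
    using V_module_extends_to_L[OF M, of Y''] compat compat'' by simp
  then show "in_image YL sL UNIV oneL p V0 sW Y0" using compat unfolding in_image_def by auto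
qed

lemma V_module_eq_if_eq_on_V0:
  assumes "tmod Y sV UNIV one sW UNIV Y1" "tmod Y sV UNIV one sW UNIV Y2"
    and "\<forall>u\<in>V0. \<forall>m0 m w. Y1 u m0 m w = Y2 u m0 m w"
  shows "Y1 u m0 m w = Y2 u m0 m w"
  using tmod_mode_via_vacuum[OF V assms(1)] tmod_mode_via_vacuum[OF V assms(2)]
    assms(3) vacuum_mode_in_V0 by simp

lemma L_module_eq_if_eq_on_V0:
  assumes "tmod YL sL UNIV oneL sW UNIV Y1" "tmod YL sL UNIV oneL sW UNIV Y2"
    and "\<forall>u\<in>V0. \<forall>m0 m w. Y1 (p u) m0 m w = Y2 (p u) m0 m w"
  shows "Y1 a m0 m w = Y2 a m0 m w"
proof -
  obtain v where "a = p v" using surj by (metis surjD)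
  then show ?thesis
    using L_module_mode_via_V0[OF assms(1)] L_module_mode_via_V0[OF assms(2)]
      assms(3) vacuum_mode_in_V0 by simp
qed

lemma V_module_hom_if_V0_hom:
  assumes M1: "tmod Y sV UNIV one s1 UNIV Y1" and M2: "tmod Y sV UNIV one s2 UNIV Y2"
    and hom_V0: "tmod_hom V0 s1 Y1 s2 Y2 f"
  shows "tmod_hom UNIV s1 Y1 s2 Y2 f"
proof -
  have "f (Y1 u m0 m w) = Y2 u m0 m (f w)" for u m0 m w
  proof -
    have "f (Y1 u m0 m w) = f (Y1 (Y u (-1) m one) m0 m w)"
      using tmod_mode_via_vacuum[OF V M1] by metis
    also have "\<dots> = Y2 (Y u (-1) m one) m0 m (f w)"
      using hom_V0 vacuum_mode_in_V0 unfolding tmod_hom_def by blast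
    also have "\<dots> = Y2 u m0 m (f w)"
      using tmod_mode_via_vacuum[OF V M2] by metis
    finally show ?thesis .
  qed
  then show ?thesis using hom_V0 unfolding tmod_hom_def by blast
qed

lemma L_module_hom_if_V0_hom:
  assumes M1: "tmod YL sL UNIV oneL s1 UNIV Y1" and M2: "tmod YL sL UNIV oneL s2 UNIV Y2"
    and hom_V0: "tmod_hom V0 s1 (\<lambda>u. Y1 (p u)) s2 (\<lambda>u. Y2 (p u)) f"
  shows "tmod_hom UNIV s1 Y1 s2 Y2 f"
proof -
  have "f (Y1 (p v) m0 m w) = Y2 (p v) m0 m (f w)" for v m0 m w
  proof -
    have "f (Y1 (p v) m0 m w) = f (Y1 (p (Y v (-1) m one)) m0 m w)"
      using L_module_mode_via_V0[OF M1] by metis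
    also have "\<dots> = Y2 (p (Y v (-1) m one)) m0 m (f w)"
      using hom_V0 vacuum_mode_in_V0 unfolding tmod_hom_def by blast
    also have "\<dots> = Y2 (p v) m0 m (f w)"
      using L_module_mode_via_V0[OF M2] by metis
    finally show ?thesis .
  qed
  then show ?thesis using hom_V0 surj unfolding tmod_hom_def by (metis surjD)
qed

end

theorem proposition2p26:
  fixes Y :: "'v::ab_group_add \<Rightarrow> int \<Rightarrow> ('r::finite \<Rightarrow> int) \<Rightarrow> 'v \<Rightarrow> 'v"
    and sV :: "complex \<Rightarrow> 'v \<Rightarrow> 'v" and one :: 'v and I :: "'v set"
    and YL :: "'l::ab_group_add \<Rightarrow> int \<Rightarrow> ('r \<Rightarrow> int) \<Rightarrow> 'l \<Rightarrow> 'l"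
    and sL :: "complex \<Rightarrow> 'l \<Rightarrow> 'l" and oneL :: 'l and p :: "'v \<Rightarrow> 'l"
    and V0 :: "'v set" and L0 :: "'l set"
  assumes V: "tva Y sV UNIV one"
    and I: "tideal Y sV I"
    \<comment> \<open>L = V/I with quotient map p\<close>
    and L: "tva YL sL UNIV oneL"
    and p_lin: "is_linear sV sL p" and p_surj: "surj p" and p_ker: "{v. p v = 0} = I"
    and p_Y: "\<forall>u v m0 m. p (Y u m0 m v) = YL (p u) m0 m (p v)"
    and p_one: "p one = oneL"
  defines "V0 \<equiv> tva_zero Y sV UNIV one" and "L0 \<equiv> tva_zero YL sL UNIV oneL"
  shows
    \<comment> \<open>(1) a V-module is naturally an L-module iff it is naturally an L^0-module\<close>
    "(\<forall>(sW :: complex \<Rightarrow> 'w::ab_group_add \<Rightarrow> 'w) YW. tmod Y sV UNIV one sW UNIV YW \<longrightarrow>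
        (in_image YL sL UNIV oneL p UNIV sW YW \<longleftrightarrow> in_image YL sL L0 oneL p V0 sW YW))
   \<and>
    \<comment> \<open>(2) objects: L-mod = V-mod \<inter> L^0-mod inside V^0-mod\<close>
    (\<forall>(sW :: complex \<Rightarrow> 'w \<Rightarrow> 'w) Y0. tmod Y sV V0 one sW UNIV Y0 \<longrightarrow>
        (in_image YL sL UNIV oneL p V0 sW Y0 \<longleftrightarrow>
           in_image Y sV UNIV one id V0 sW Y0 \<and> in_image YL sL L0 oneL p V0 sW Y0))
   \<and>
    \<comment> \<open>(3) the three restriction functors are injective on objects\<close>
    (\<forall>(sW :: complex \<Rightarrow> 'w \<Rightarrow> 'w) Y1 Y2.
        tmod YL sL UNIV oneL sW UNIV Y1 \<and> tmod YL sL UNIV oneL sW UNIV Y2 \<and>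
        (\<forall>u\<in>V0. \<forall>m0 m w. Y1 (p u) m0 m w = Y2 (p u) m0 m w) \<longrightarrow>
        (\<forall>a m0 m w. Y1 a m0 m w = Y2 a m0 m w))
   \<and>
    (\<forall>(sW :: complex \<Rightarrow> 'w \<Rightarrow> 'w) Y1 Y2.
        tmod Y sV UNIV one sW UNIV Y1 \<and> tmod Y sV UNIV one sW UNIV Y2 \<and>
        (\<forall>u\<in>V0. \<forall>m0 m w. Y1 u m0 m w = Y2 u m0 m w) \<longrightarrow>
        (\<forall>a m0 m w. Y1 a m0 m w = Y2 a m0 m w))
   \<and>
    (\<forall>(sW :: complex \<Rightarrow> 'w \<Rightarrow> 'w) Y1 Y2.
        tmod YL sL L0 oneL sW UNIV Y1 \<and> tmod YL sL L0 oneL sW UNIV Y2 \<and>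
        (\<forall>u\<in>V0. \<forall>m0 m w. Y1 (p u) m0 m w = Y2 (p u) m0 m w) \<longrightarrow>
        (\<forall>a\<in>L0. \<forall>m0 m w. Y1 a m0 m w = Y2 a m0 m w))
   \<and>
    \<comment> \<open>(4) fullness: V^0-module maps between such modules are module maps\<close>
    (\<forall>(s1 :: complex \<Rightarrow> 'w \<Rightarrow> 'w) Y1 (s2 :: complex \<Rightarrow> 'w2::ab_group_add \<Rightarrow> 'w2) Y2 f.
        tmod YL sL UNIV oneL s1 UNIV Y1 \<and> tmod YL sL UNIV oneL s2 UNIV Y2 \<and>
        tmod_hom V0 s1 (\<lambda>u. Y1 (p u)) s2 (\<lambda>u. Y2 (p u)) f \<longrightarrow>
        tmod_hom UNIV s1 Y1 s2 Y2 f)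
   \<and>
    (\<forall>(s1 :: complex \<Rightarrow> 'w \<Rightarrow> 'w) Y1 (s2 :: complex \<Rightarrow> 'w2 \<Rightarrow> 'w2) Y2 f.
        tmod Y sV UNIV one s1 UNIV Y1 \<and> tmod Y sV UNIV one s2 UNIV Y2 \<and>
        tmod_hom V0 s1 Y1 s2 Y2 f \<longrightarrow>
        tmod_hom UNIV s1 Y1 s2 Y2 f)
   \<and>
    (\<forall>(s1 :: complex \<Rightarrow> 'w \<Rightarrow> 'w) Y1 (s2 :: complex \<Rightarrow> 'w2 \<Rightarrow> 'w2) Y2 f.
        tmod YL sL L0 oneL s1 UNIV Y1 \<and> tmod YL sL L0 oneL s2 UNIV Y2 \<and>
        tmod_hom V0 s1 (\<lambda>u. Y1 (p u)) s2 (\<lambda>u. Y2 (p u)) f \<longrightarrow>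
        tmod_hom L0 s1 Y1 s2 Y2 f)
   \<and>
    \<comment> \<open>(5) strictness: closed under isomorphism of V^0-modules\<close>
    (\<forall>(s1 :: complex \<Rightarrow> 'w \<Rightarrow> 'w) Y1 (s2 :: complex \<Rightarrow> 'w2 \<Rightarrow> 'w2) Y2 f.
        in_image YL sL UNIV oneL p V0 s1 Y1 \<and> tmod Y sV V0 one s2 UNIV Y2 \<and>
        tmod_hom V0 s1 Y1 s2 Y2 f \<and> bij f \<longrightarrow> in_image YL sL UNIV oneL p V0 s2 Y2)
   \<and>
    (\<forall>(s1 :: complex \<Rightarrow> 'w \<Rightarrow> 'w) Y1 (s2 :: complex \<Rightarrow> 'w2 \<Rightarrow> 'w2) Y2 f.
        in_image Y sV UNIV one id V0 s1 Y1 \<and> tmod Y sV V0 one s2 UNIV Y2 \<and>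
        tmod_hom V0 s1 Y1 s2 Y2 f \<and> bij f \<longrightarrow> in_image Y sV UNIV one id V0 s2 Y2)
   \<and>
    (\<forall>(s1 :: complex \<Rightarrow> 'w \<Rightarrow> 'w) Y1 (s2 :: complex \<Rightarrow> 'w2 \<Rightarrow> 'w2) Y2 f.
        in_image YL sL L0 oneL p V0 s1 Y1 \<and> tmod Y sV V0 one s2 UNIV Y2 \<and>
        tmod_hom V0 s1 Y1 s2 Y2 f \<and> bij f \<longrightarrow> in_image YL sL L0 oneL p V0 s2 Y2)"
proof -
  interpret tva_surj_hom Y sV one YL sL oneL p
    using V L p_lin p_surj p_Y p_one by unfold_locales simp_all
  show ?thesis unfolding V0_def L0_def
    by (intro conjI allI impI ballI; (elim conjE)?;
        ((rule V_module_in_image_L_iff_L0 in_image_L_iff_V_and_L0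
            L_module_eq_if_eq_on_V0 V_module_eq_if_eq_on_V0
            L_module_hom_if_V0_hom V_module_hom_if_V0_hom
            tmod_hom_image[OF _ L0_subset_image_V0] in_image_transport_bij; assumption)
         | use L0_subset_image_V0 in blast))
qed

end
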